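(* Let $A$ and $B$ be countable groups equipped with left-invariant proper metrics, and equip the free product $G=A\ast B$ with the natural left-invariant proper metric induced from $A$ and $B$. If $A$ and $B$ have asymptotic property C, then $G$ has asymptotic property C.
   Context: Writing $\|\cdot\|_A,\|\cdot\|_B$ for the norms $\|a\|=d(e,a)$, the natural metric on $A\ast B$ is $d(g,h)=\|g^{-1}h\|$, where for $g$ with normal form $g=g_1\cdots g_\ell$ (each $g_i$ a non-trivial element of $A$ or $B$, consecutive ones from different factors) $\|g\|=\sum_i\|g_i\|$. A metric is proper if bounded sets are finite. A metric space $X$ has asymptotic property C if for every sequence $R_1\le R_2\le\cdots$ of positive numbers there exist $n$ and families $\mathcal U^1,\dots,\mathcal U^n$ of subsets, each uniformly bounded (sup of diameters finite), with $\mathcal U^i$ $R_i$-disjoint (distinct members at distance $>R_i$), whose union covers $X$. *)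

theory Defs
  imports Complex_Main "HOL-Algebra.Group" "HOL-Library.Countable_Set"
begin

definition metric_on :: "'a set \<Rightarrow> ('a \<Rightarrow> 'a \<Rightarrow> real) \<Rightarrow> bool" where
  "metric_on M d \<longleftrightarrow>
     (\<forall>x\<in>M. \<forall>y\<in>M. 0 \<le> d x y \<and> d x y = d y x \<and> (d x y = 0 \<longleftrightarrow> x = y)) \<and>
     (\<forall>x\<in>M. \<forall>y\<in>M. \<forall>z\<in>M. d x z \<le> d x y + d y z)"

definition bounded_in :: "('a \<Rightarrow> 'a \<Rightarrow> real) \<Rightarrow> 'a set \<Rightarrow> bool" where
  "bounded_in d S \<longleftrightarrow> (\<exists>D. \<forall>x\<in>S. \<forall>y\<in>S. d x y \<le> D)"

definition proper_metric :: "'a set \<Rightarrow> ('a \<Rightarrow> 'a \<Rightarrow> real) \<Rightarrow> bool" where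
  "proper_metric M d \<longleftrightarrow> (\<forall>S. S \<subseteq> M \<longrightarrow> bounded_in d S \<longrightarrow> finite S)"

definition left_invariant :: "('a, 'm) monoid_scheme \<Rightarrow> ('a \<Rightarrow> 'a \<Rightarrow> real) \<Rightarrow> bool" where
  "left_invariant G d \<longleftrightarrow>
     (\<forall>g\<in>carrier G. \<forall>x\<in>carrier G. \<forall>y\<in>carrier G. d (g \<otimes>\<^bsub>G\<^esub> x) (g \<otimes>\<^bsub>G\<^esub> y) = d x y)"

definition unif_bounded :: "('a \<Rightarrow> 'a \<Rightarrow> real) \<Rightarrow> 'a set set \<Rightarrow> bool" where
  "unif_bounded d \<U> \<longleftrightarrow> (\<exists>D. \<forall>U\<in>\<U>. \<forall>x\<in>U. \<forall>y\<in>U. d x y \<le> D)"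

definition R_disjoint :: "('a \<Rightarrow> 'a \<Rightarrow> real) \<Rightarrow> real \<Rightarrow> 'a set set \<Rightarrow> bool" where
  "R_disjoint d R \<U> \<longleftrightarrow>
     (\<forall>U\<in>\<U>. \<forall>V\<in>\<U>. U \<noteq> V \<longrightarrow> (\<forall>x\<in>U. \<forall>y\<in>V. d x y > R))"

text \<open>Sequences R_1 \<le> R_2 \<le> ... are indexed from 0 here; families U^1..U^n
  correspond to indices 0..n-1.\<close>
definition asym_property_C :: "'a set \<Rightarrow> ('a \<Rightarrow> 'a \<Rightarrow> real) \<Rightarrow> bool" where
  "asym_property_C X d \<longleftrightarrow>
     (\<forall>R :: nat \<Rightarrow> real. (\<forall>i. 0 < R i) \<and> mono R \<longrightarrow>
        (\<exists>n. \<exists>\<U> :: nat \<Rightarrow> 'a set set.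
           (\<forall>i<n. (\<forall>U\<in>\<U> i. U \<subseteq> X) \<and> unif_bounded d (\<U> i) \<and> R_disjoint d (R i) (\<U> i)) \<and>
           X \<subseteq> (\<Union>i<n. \<Union>(\<U> i))))"

text \<open>Elements of A * B are reduced words: lists of letters Inl a (a in A) or Inr b
  (b in B), each non-trivial, consecutive letters from different factors.\<close>

fun alternating :: "('a + 'b) list \<Rightarrow> bool" where
  "alternating [] = True"
| "alternating [x] = True"
| "alternating (Inl _ # Inl _ # _) = False"
| "alternating (Inr _ # Inr _ # _) = False"
| "alternating (x # y # w) = alternating (y # w)"

definition letter_ok :: "('a, 'm) monoid_scheme \<Rightarrow> ('b, 'n) monoid_scheme \<Rightarrow> ('a + 'b) \<Rightarrow> bool" where
  "letter_ok A B x = (case x of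
      Inl a \<Rightarrow> a \<in> carrier A \<and> a \<noteq> \<one>\<^bsub>A\<^esub>
    | Inr b \<Rightarrow> b \<in> carrier B \<and> b \<noteq> \<one>\<^bsub>B\<^esub>)"

definition fp_carrier :: "('a, 'm) monoid_scheme \<Rightarrow> ('b, 'n) monoid_scheme \<Rightarrow> ('a + 'b) list set" where
  "fp_carrier A B = {w. (\<forall>x\<in>set w. letter_ok A B x) \<and> alternating w}"

fun fp_cons :: "('a, 'm) monoid_scheme \<Rightarrow> ('b, 'n) monoid_scheme \<Rightarrow> ('a + 'b) \<Rightarrow> ('a + 'b) list \<Rightarrow> ('a + 'b) list" where
  "fp_cons A B (Inl a) w =
     (if a = \<one>\<^bsub>A\<^esub> then w else
       (case w of
          Inl a' # w' \<Rightarrow> (if a \<otimes>\<^bsub>A\<^esub> a' = \<one>\<^bsub>A\<^esub> then w' else Inl (a \<otimes>\<^bsub>A\<^esub> a') # w')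
        | _ \<Rightarrow> Inl a # w))"
| "fp_cons A B (Inr b) w =
     (if b = \<one>\<^bsub>B\<^esub> then w else
       (case w of
          Inr b' # w' \<Rightarrow> (if b \<otimes>\<^bsub>B\<^esub> b' = \<one>\<^bsub>B\<^esub> then w' else Inr (b \<otimes>\<^bsub>B\<^esub> b') # w')
        | _ \<Rightarrow> Inr b # w))"

definition fp_mult :: "('a, 'm) monoid_scheme \<Rightarrow> ('b, 'n) monoid_scheme \<Rightarrow> ('a + 'b) list \<Rightarrow> ('a + 'b) list \<Rightarrow> ('a + 'b) list" where
  "fp_mult A B u v = foldr (fp_cons A B) u v"

definition fp_inv :: "('a, 'm) monoid_scheme \<Rightarrow> ('b, 'n) monoid_scheme \<Rightarrow> ('a + 'b) list \<Rightarrow> ('a + 'b) list" where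
  "fp_inv A B w = rev (map (\<lambda>x. case x of Inl a \<Rightarrow> Inl (inv\<^bsub>A\<^esub> a) | Inr b \<Rightarrow> Inr (inv\<^bsub>B\<^esub> b)) w)"

definition fp_norm :: "('a, 'm) monoid_scheme \<Rightarrow> ('b, 'n) monoid_scheme \<Rightarrow>
    ('a \<Rightarrow> 'a \<Rightarrow> real) \<Rightarrow> ('b \<Rightarrow> 'b \<Rightarrow> real) \<Rightarrow> ('a + 'b) list \<Rightarrow> real" where
  "fp_norm A B dA dB w =
     sum_list (map (\<lambda>x. case x of Inl a \<Rightarrow> dA \<one>\<^bsub>A\<^esub> a | Inr b \<Rightarrow> dB \<one>\<^bsub>B\<^esub> b) w)"

definition fp_dist :: "('a, 'm) monoid_scheme \<Rightarrow> ('b, 'n) monoid_scheme \<Rightarrow>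
    ('a \<Rightarrow> 'a \<Rightarrow> real) \<Rightarrow> ('b \<Rightarrow> 'b \<Rightarrow> real) \<Rightarrow> ('a + 'b) list \<Rightarrow> ('a + 'b) list \<Rightarrow> real" where
  "fp_dist A B dA dB g h = fp_norm A B dA dB (fp_mult A B (fp_inv A B g) h)"

end

theory Submission
  imports Defs
begin

text \<open>Elements of \<open>A * B\<close> are reduced words, and the natural distance is a tree distance:
  after cancelling the longest common prefix of two words it is the distance of their first
  differing letters (the factor distance if both lie in the same factor, the sum of their norms
  otherwise) plus the norms of the two remaining tails.

  Given \<open>R\<close>, cover \<open>A\<close> and \<open>B\<close> for the sequence \<open>i \<mapsto> R (2i+1)\<close> by at most \<open>n\<close> families
  and let \<open>L = 2 R (2n) + 2\<close>. A word of level \<open>k\<close>, i.e. of norm in \<open>[kL, (k+1)L)\<close>, splits as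
  stem, pivot letter and tail, the stem being its longest prefix of norm at most \<open>kL - L/2\<close>;
  hence the tail has norm below \<open>3L/2\<close>. Grouping words by level, stem and the cover set
  containing the pivot gives uniformly bounded groups, and colouring a group by \<open>2i + (k mod 2)\<close>,
  where \<open>i\<close> is the family of that cover set, separates groups of equal colour: levels of equal
  parity differ in norm by more than \<open>L\<close>, different stems force distance \<open>L/2\<close>, pivots in
  different factors contribute \<open>L/2\<close>, and pivots in different sets of family \<open>i\<close> are
  \<open>R (2i+1)\<close> apart.\<close>

lemma alternating_Cons_Cons:
  "alternating (x # y # w) \<longleftrightarrow> isl x \<noteq> isl y \<and> alternating (y # w)"
  by (cases x; cases y) auto

lemma alternating_Cons:
  "alternating (x # w) \<longleftrightarrow> alternating w \<and> (w = [] \<or> isl x \<noteq> isl (hd w))"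
  by (cases w) (auto simp: alternating_Cons_Cons)

lemma alternating_append:
  "alternating (u @ v) \<longleftrightarrow>
     alternating u \<and> alternating v \<and> (u = [] \<or> v = [] \<or> isl (last u) \<noteq> isl (hd v))"
  by (induction u) (auto simp: alternating_Cons)

lemma fp_carrier_Cons:
  "x # w \<in> fp_carrier A B \<longleftrightarrow>
     letter_ok A B x \<and> w \<in> fp_carrier A B \<and> (w = [] \<or> isl x \<noteq> isl (hd w))"
  by (auto simp: fp_carrier_def alternating_Cons)

lemma fp_carrier_append:
  "u @ v \<in> fp_carrier A B \<longleftrightarrow>
     u \<in> fp_carrier A B \<and> v \<in> fp_carrier A B \<and> (u = [] \<or> v = [] \<or> isl (last u) \<noteq> isl (hd v))"
  by (auto simp: fp_carrier_def alternating_append)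

lemma fp_carrier_letters: "w \<in> fp_carrier A B \<Longrightarrow> list_all (letter_ok A B) w"
  by (simp add: fp_carrier_def list_all_iff)

definition letter_inv :: "('a, 'm) monoid_scheme \<Rightarrow> ('b, 'n) monoid_scheme \<Rightarrow> 'a + 'b \<Rightarrow> 'a + 'b" where
  "letter_inv A B = map_sum (m_inv A) (m_inv B)"

lemma isl_letter_inv [simp]: "isl (letter_inv A B x) = isl x"
  by (cases x) (simp_all add: letter_inv_def)

lemma fp_inv_eq: "fp_inv A B w = rev (map (letter_inv A B) w)"
  unfolding fp_inv_def letter_inv_def by (intro arg_cong[where f = rev] map_cong) (auto split: sum.split)

lemma fp_inv_eq_Nil_iff [simp]: "fp_inv A B w = [] \<longleftrightarrow> w = []"
  by (simp add: fp_inv_eq)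

lemma fp_inv_Cons: "fp_inv A B (x # w) = fp_inv A B w @ [letter_inv A B x]"
  by (simp add: fp_inv_eq)

lemma last_fp_inv: "w \<noteq> [] \<Longrightarrow> last (fp_inv A B w) = letter_inv A B (hd w)"
  by (cases w) (simp_all add: fp_inv_Cons)

lemma alternating_fp_inv: "alternating (fp_inv A B w) \<longleftrightarrow> alternating w"
  by (induction w) (auto simp: fp_inv_eq alternating_append alternating_Cons last_rev hd_map)

lemma fp_mult_Nil [simp]: "fp_mult A B [] v = v"
  by (simp add: fp_mult_def)

lemma fp_mult_Cons: "fp_mult A B (x # u) v = fp_cons A B x (fp_mult A B u v)"
  by (simp add: fp_mult_def)

lemma fp_mult_append: "fp_mult A B (u @ u') v = fp_mult A B u (fp_mult A B u' v)"
  by (simp add: fp_mult_def)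

lemma fp_cons_reduced: "x # w \<in> fp_carrier A B \<Longrightarrow> fp_cons A B x w = x # w"
  by (cases x; cases w) (auto simp: fp_carrier_Cons letter_ok_def split: sum.splits)

lemma fp_mult_reduced: "u @ v \<in> fp_carrier A B \<Longrightarrow> fp_mult A B u v = u @ v"
  by (induction u) (auto simp: fp_mult_Cons fp_carrier_Cons fp_cons_reduced)

lemma metric_on_dist_bounds:
  assumes "metric_on M d" "e \<in> M" "x \<in> M" "y \<in> M"
  shows "0 \<le> d x y" "d x y = d y x" "d x y \<le> d e x + d e y" "\<bar>d e x - d e y\<bar> \<le> d x y"
proof -
  have tri: "d u w \<le> d u v + d v w" if "u \<in> M" "v \<in> M" "w \<in> M" for u v w
    using assms(1) that unfolding metric_on_def by blast
  have sym: "d u v = d v u" if "u \<in> M" "v \<in> M" for u v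
    using assms(1) that unfolding metric_on_def by blast
  show "0 \<le> d x y" using assms unfolding metric_on_def by blast
  show "d x y = d y x" using sym assms by blast
  show "d x y \<le> d e x + d e y" using tri[of x e y] sym[of x e] assms by simp
  show "\<bar>d e x - d e y\<bar> \<le> d x y" using tri[of e x y] tri[of e y x] sym[of x y] assms by linarith
qed

lemma (in group) left_invariant_dist_one:
  assumes "left_invariant G d" "a \<in> carrier G" "b \<in> carrier G"
  shows "d \<one> (inv a \<otimes> b) = d a b"
proof -
  have "d (a \<otimes> \<one>) (a \<otimes> (inv a \<otimes> b)) = d \<one> (inv a \<otimes> b)"
    using assms unfolding left_invariant_def by (meson inv_closed m_closed one_closed)
  then show ?thesis using assms by (simp add: m_assoc[symmetric])
qed

lemma (in group) inv_mult_eq_one_iff: "a \<in> carrier G \<Longrightarrow> b \<in> carrier G \<Longrightarrow> inv a \<otimes> b = \<one> \<longleftrightarrow> a = b"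
  by (auto simp: inv_solve_left')

text \<open>The fibres of \<open>key\<close> inside the colour class \<open>i\<close> form the family \<open>\<U>\<^sup>i\<close> of asymptotic
  property C.\<close>

definition prop_C_colouring ::
    "'a set \<Rightarrow> ('a \<Rightarrow> 'a \<Rightarrow> real) \<Rightarrow> (nat \<Rightarrow> real) \<Rightarrow> nat \<Rightarrow> real \<Rightarrow> ('a \<Rightarrow> nat) \<Rightarrow> ('a \<Rightarrow> 'k) \<Rightarrow> bool" where
  "prop_C_colouring X d R n D colour key \<longleftrightarrow>
     (\<forall>x\<in>X. colour x < n) \<and>
     (\<forall>x\<in>X. \<forall>y\<in>X. key x = key y \<longrightarrow> d x y \<le> D) \<and>
     (\<forall>x\<in>X. \<forall>y\<in>X. colour x = colour y \<longrightarrow> key x \<noteq> key y \<longrightarrow> R (colour x) < d x y)"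

lemma asym_property_C_if_colourings:
  assumes "\<And>R. \<forall>i. 0 < R i \<Longrightarrow> mono R \<Longrightarrow>
    \<exists>n D colour (key :: 'a \<Rightarrow> 'k). prop_C_colouring X d R n D colour key"
  shows "asym_property_C X d"
  unfolding asym_property_C_def
proof (intro allI impI)
  fix R :: "nat \<Rightarrow> real"
  assume "(\<forall>i. 0 < R i) \<and> mono R"
  then obtain n D colour and key :: "'a \<Rightarrow> 'k" where "prop_C_colouring X d R n D colour key"
    using assms by blast
  then have less: "\<And>x. x \<in> X \<Longrightarrow> colour x < n"
    and bounded: "\<And>x y. x \<in> X \<Longrightarrow> y \<in> X \<Longrightarrow> key x = key y \<Longrightarrow> d x y \<le> D"
    and separated: "\<And>x y. x \<in> X \<Longrightarrow> y \<in> X \<Longrightarrow> colour x = colour y \<Longrightarrow> key x \<noteq> key y \<Longrightarrow> R (colour x) < d x y"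
    unfolding prop_C_colouring_def by blast+
  define cell where "cell i k = {x \<in> X. colour x = i \<and> key x = k}" for i k
  define \<U> where "\<U> i = range (cell i)" for i
  have "\<forall>U\<in>\<U> i. U \<subseteq> X" for i
    by (auto simp: \<U>_def cell_def)
  moreover have "unif_bounded d (\<U> i)" for i
    unfolding unif_bounded_def
  proof (intro exI[of _ D] ballI)
    fix U x y
    assume "U \<in> \<U> i" "x \<in> U" "y \<in> U"
    then obtain k where "U = cell i k" unfolding \<U>_def by blast
    with \<open>x \<in> U\<close> \<open>y \<in> U\<close> show "d x y \<le> D" using bounded by (auto simp: cell_def)
  qed
  moreover have "R_disjoint d (R i) (\<U> i)" for i
    unfolding R_disjoint_def
  proof (intro ballI impI)
    fix U V x y
    assume "U \<in> \<U> i" "V \<in> \<U> i" "U \<noteq> V" "x \<in> U" "y \<in> V"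
    then obtain k k' where "U = cell i k" "V = cell i k'" "k \<noteq> k'"
      unfolding \<U>_def by blast
    with \<open>x \<in> U\<close> \<open>y \<in> V\<close> have "x \<in> X" "y \<in> X" "colour x = i" "colour y = i" "key x \<noteq> key y"
      by (auto simp: cell_def)
    then show "R i < d x y" using separated[of x y] by simp
  qed
  moreover have "X \<subseteq> (\<Union>i<n. \<Union>(\<U> i))"
  proof
    fix x assume "x \<in> X"
    then have "x \<in> cell (colour x) (key x)" "colour x < n" by (simp_all add: cell_def less)
    then show "x \<in> (\<Union>i<n. \<Union>(\<U> i))" unfolding \<U>_def by blast
  qed
  ultimately show "\<exists>n \<U>. (\<forall>i<n. (\<forall>U\<in>\<U> i. U \<subseteq> X) \<and> unif_bounded d (\<U> i) \<and> R_disjoint d (R i) (\<U> i)) \<and>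
      X \<subseteq> (\<Union>i<n. \<Union>(\<U> i))"
    by (intro exI[of _ n] exI[of _ \<U>]) simp
qed

lemma colouring_if_asym_property_C:
  assumes "asym_property_C X d" "\<forall>i. 0 < R i" "mono R"
  obtains n D colour key where "prop_C_colouring X d R n D colour (key :: 'a \<Rightarrow> 'a set)" "0 \<le> D"
proof -
  obtain n \<U> where \<U>: "\<forall>i<n. unif_bounded d (\<U> i) \<and> R_disjoint d (R i) (\<U> i)"
    and cover: "X \<subseteq> (\<Union>i<n. \<Union>(\<U> i))"
    using assms(1)[unfolded asym_property_C_def, rule_format, OF conjI[OF assms(2,3)]] by blast
  have "\<forall>i\<in>{..<n}. \<exists>D. \<forall>U\<in>\<U> i. \<forall>x\<in>U. \<forall>y\<in>U. d x y \<le> D"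
    using \<U> by (simp add: unif_bounded_def)
  from bchoice[OF this] obtain Ds where Ds: "\<forall>i\<in>{..<n}. \<forall>U\<in>\<U> i. \<forall>x\<in>U. \<forall>y\<in>U. d x y \<le> Ds i"
    by blast
  have "\<forall>x\<in>X. \<exists>c. fst c < n \<and> snd c \<in> \<U> (fst c) \<and> x \<in> snd c"
    using cover by fastforce
  from bchoice[OF this] obtain c where c: "\<forall>x\<in>X. fst (c x) < n \<and> snd (c x) \<in> \<U> (fst (c x)) \<and> x \<in> snd (c x)"
    by blast
  define colour where "colour x = fst (c x)" for x
  define key where "key x = snd (c x)" for x
  have cell: "colour x < n" "key x \<in> \<U> (colour x)" "x \<in> key x" if "x \<in> X" for x
    using c that by (simp_all add: colour_def key_def)
  define D where "D = (\<Sum>i<n. \<bar>Ds i\<bar>)"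
  have D: "Ds i \<le> D" if "i < n" for i
    using that member_le_sum[of i "{..<n}" "\<lambda>i. \<bar>Ds i\<bar>"] unfolding D_def by force
  have "prop_C_colouring X d R n D colour key"
    unfolding prop_C_colouring_def
  proof (intro conjI ballI impI)
    fix x y assume x: "x \<in> X" and y: "y \<in> X"
    show "colour x < n" using cell(1)[OF x] .
    show "d x y \<le> D" if "key x = key y"
    proof -
      have "d x y \<le> Ds (colour x)"
        using Ds cell[OF x] cell(3)[OF y] that by auto
      then show ?thesis using D[OF cell(1)[OF x]] by linarith
    qed
    show "R (colour x) < d x y" if "colour x = colour y" "key x \<noteq> key y"
    proof -
      have "R_disjoint d (R (colour x)) (\<U> (colour x))" using \<U> cell(1)[OF x] by blast
      moreover have "key y \<in> \<U> (colour x)" using cell(2)[OF y] that(1) by simp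
      ultimately show ?thesis
        using cell(2,3)[OF x] cell(3)[OF y] that(2) unfolding R_disjoint_def by blast
    qed
  qed
  moreover have "0 \<le> D" by (simp add: D_def sum_nonneg)
  ultimately show ?thesis by (rule that)
qed

locale free_product_metric =
  fixes A :: "('a, 'm) monoid_scheme" and B :: "('b, 'n) monoid_scheme"
    and dA :: "'a \<Rightarrow> 'a \<Rightarrow> real" and dB :: "'b \<Rightarrow> 'b \<Rightarrow> real"
  assumes group_A: "group A" and group_B: "group B"
    and metric_A: "metric_on (carrier A) dA" and metric_B: "metric_on (carrier B) dB"
    and invariant_A: "left_invariant A dA" and invariant_B: "left_invariant B dB"
begin

interpretation A: group A by (rule group_A)
interpretation B: group B by (rule group_B)

abbreviation G :: "('a + 'b) list set" where
  "G \<equiv> fp_carrier A B"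

abbreviation word_norm :: "('a + 'b) list \<Rightarrow> real" where
  "word_norm \<equiv> fp_norm A B dA dB"

definition letter_norm :: "'a + 'b \<Rightarrow> real" where
  "letter_norm = case_sum (dA \<one>\<^bsub>A\<^esub>) (dB \<one>\<^bsub>B\<^esub>)"

text \<open>The distance of the one-letter words \<open>[x]\<close> and \<open>[y]\<close>, for \<open>x \<noteq> y\<close>.\<close>

definition letter_dist :: "'a + 'b \<Rightarrow> 'a + 'b \<Rightarrow> real" where
  "letter_dist x y =
     (case (x, y) of
        (Inl a, Inl a') \<Rightarrow> dA a a'
      | (Inr b, Inr b') \<Rightarrow> dB b b'
      | _ \<Rightarrow> letter_norm x + letter_norm y)"

fun word_dist :: "('a + 'b) list \<Rightarrow> ('a + 'b) list \<Rightarrow> real" where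
  "word_dist [] h = word_norm h"
| "word_dist (x # g) [] = word_norm (x # g)"
| "word_dist (x # g) (y # h) =
     (if x = y then word_dist g h else letter_dist x y + word_norm g + word_norm h)"

lemma word_norm_simps [simp]:
  "word_norm [] = 0"
  "word_norm (x # w) = letter_norm x + word_norm w"
  "word_norm (u @ w) = word_norm u + word_norm w"
  by (simp_all add: fp_norm_def letter_norm_def)

lemma letter_norm_nonneg: "letter_ok A B x \<Longrightarrow> 0 \<le> letter_norm x"
  using metric_on_dist_bounds(1)[OF metric_A] metric_on_dist_bounds(1)[OF metric_B]
  by (cases x) (auto simp: letter_norm_def letter_ok_def)

lemma word_norm_nonneg: "list_all (letter_ok A B) w \<Longrightarrow> 0 \<le> word_norm w"
  by (induction w) (auto intro: add_nonneg_nonneg letter_norm_nonneg)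

lemma letter_ok_letter_inv: "letter_ok A B x \<Longrightarrow> letter_ok A B (letter_inv A B x)"
  by (cases x) (auto simp: letter_ok_def letter_inv_def)

lemma letter_norm_letter_inv: "letter_ok A B x \<Longrightarrow> letter_norm (letter_inv A B x) = letter_norm x"
  using A.left_invariant_dist_one[OF invariant_A, of _ "\<one>\<^bsub>A\<^esub>"]
    B.left_invariant_dist_one[OF invariant_B, of _ "\<one>\<^bsub>B\<^esub>"]
    metric_on_dist_bounds(2)[OF metric_A, of "\<one>\<^bsub>A\<^esub>"]
    metric_on_dist_bounds(2)[OF metric_B, of "\<one>\<^bsub>B\<^esub>"]
  by (cases x) (auto simp: letter_ok_def letter_inv_def letter_norm_def)

lemma word_norm_fp_inv: "list_all (letter_ok A B) w \<Longrightarrow> word_norm (fp_inv A B w) = word_norm w"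
  by (induction w) (auto simp: fp_inv_eq letter_norm_letter_inv)

lemma fp_inv_closed: "w \<in> G \<Longrightarrow> fp_inv A B w \<in> G"
  using alternating_fp_inv[of A B w] by (auto simp: fp_carrier_def fp_inv_eq letter_ok_letter_inv)

lemma letter_dist_other_factor: "isl x \<noteq> isl y \<Longrightarrow> letter_dist x y = letter_norm x + letter_norm y"
  by (cases x; cases y) (auto simp: letter_dist_def)

lemma letter_dist_bounds:
  assumes "letter_ok A B x" "letter_ok A B y"
  shows "0 \<le> letter_dist x y" "letter_dist x y = letter_dist y x"
    "letter_dist x y \<le> letter_norm x + letter_norm y"
    "\<bar>letter_norm x - letter_norm y\<bar> \<le> letter_dist x y"
proof -
  show "letter_dist x y = letter_dist y x"
    using assms metric_on_dist_bounds(2)[OF metric_A A.one_closed] metric_on_dist_bounds(2)[OF metric_B B.one_closed]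
    by (cases x; cases y) (auto simp: letter_dist_def letter_ok_def)
  have "0 \<le> letter_dist x y \<and> letter_dist x y \<le> letter_norm x + letter_norm y \<and>
      \<bar>letter_norm x - letter_norm y\<bar> \<le> letter_dist x y"
    using assms letter_norm_nonneg[OF assms(1)] letter_norm_nonneg[OF assms(2)]
      metric_on_dist_bounds(1,3,4)[OF metric_A A.one_closed] metric_on_dist_bounds(1,3,4)[OF metric_B B.one_closed]
    by (cases x; cases y) (auto simp: letter_dist_def letter_norm_def letter_ok_def abs_le_iff)
  then show "0 \<le> letter_dist x y" "letter_dist x y \<le> letter_norm x + letter_norm y"
    "\<bar>letter_norm x - letter_norm y\<bar> \<le> letter_dist x y"
    by auto
qed

lemma fp_cons_letter_inv_same:
  "letter_ok A B x \<Longrightarrow> fp_cons A B (letter_inv A B x) (x # w) = w"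
  by (cases x) (auto simp: letter_ok_def letter_inv_def)

lemma fp_cons_letter_inv_other_factor:
  "letter_ok A B x \<Longrightarrow> isl x \<noteq> isl y \<Longrightarrow> fp_cons A B (letter_inv A B x) (y # w) = letter_inv A B x # y # w"
  by (cases x; cases y) (auto simp: letter_ok_def letter_inv_def)

lemma fp_cons_letter_inv_same_factor:
  assumes "letter_ok A B x" "letter_ok A B y" "x \<noteq> y" "isl x = isl y"
  obtains z where "fp_cons A B (letter_inv A B x) (y # w) = z # w"
    "letter_ok A B z" "isl z = isl x" "letter_norm z = letter_dist x y"
proof (cases x)
  case (Inl a)
  with assms obtain a' where "y = Inl a'" "a \<in> carrier A" "a' \<in> carrier A" "a \<noteq> a'" "a \<noteq> \<one>\<^bsub>A\<^esub>"
    by (cases y) (auto simp: letter_ok_def)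
  with Inl that[of "Inl (inv\<^bsub>A\<^esub> a \<otimes>\<^bsub>A\<^esub> a')"] show ?thesis
    by (simp add: letter_inv_def letter_ok_def letter_norm_def letter_dist_def A.inv_mult_eq_one_iff
        A.left_invariant_dist_one[OF invariant_A])
next
  case (Inr b)
  with assms obtain b' where "y = Inr b'" "b \<in> carrier B" "b' \<in> carrier B" "b \<noteq> b'" "b \<noteq> \<one>\<^bsub>B\<^esub>"
    by (cases y) (auto simp: letter_ok_def)
  with Inr that[of "Inr (inv\<^bsub>B\<^esub> b \<otimes>\<^bsub>B\<^esub> b')"] show ?thesis
    by (simp add: letter_inv_def letter_ok_def letter_norm_def letter_dist_def B.inv_mult_eq_one_iff
        B.left_invariant_dist_one[OF invariant_B])
qed

lemma word_norm_fp_mult_fp_inv_reduced: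
  assumes "g \<in> G" "v \<in> G" "g = [] \<or> v = [] \<or> isl (hd g) \<noteq> isl (hd v)"
  shows "word_norm (fp_mult A B (fp_inv A B g) v) = word_norm g + word_norm v"
proof -
  have "fp_inv A B g @ v \<in> G"
    using assms fp_inv_closed[OF assms(1)] by (auto simp: fp_carrier_append last_fp_inv)
  then show ?thesis
    using assms(1) by (simp add: fp_mult_reduced word_norm_fp_inv fp_carrier_letters)
qed

lemma fp_dist_eq_word_dist: "g \<in> G \<Longrightarrow> h \<in> G \<Longrightarrow> fp_dist A B dA dB g h = word_dist g h"
proof (induction g h rule: word_dist.induct)
  case (1 h)
  then show ?case by (simp add: fp_dist_def fp_inv_eq)
next
  case (2 x g)
  then show ?case
    using word_norm_fp_mult_fp_inv_reduced[of "x # g" "[]"] by (simp add: fp_dist_def)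
next
  case (3 x g y h)
  have g: "g \<in> G" and h: "h \<in> G" and x: "letter_ok A B x" and y: "letter_ok A B y"
    and gx: "g = [] \<or> isl x \<noteq> isl (hd g)" and hy: "h = [] \<or> isl y \<noteq> isl (hd h)"
    using "3.prems" by (auto simp: fp_carrier_Cons)
  have dist: "fp_dist A B dA dB (x # g) (y # h) =
      word_norm (fp_mult A B (fp_inv A B g) (fp_cons A B (letter_inv A B x) (y # h)))"
    by (simp add: fp_dist_def fp_inv_Cons fp_mult_append fp_mult_Cons)
  consider "x = y" | "x \<noteq> y" "isl x = isl y" | "isl x \<noteq> isl y" by blast
  then show ?case
  proof cases
    case 1
    then show ?thesis
      unfolding dist using "3.IH" g h fp_cons_letter_inv_same[OF x] by (simp add: fp_dist_def)
  next
    case 2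
    then obtain z where z: "fp_cons A B (letter_inv A B x) (y # h) = z # h"
      "letter_ok A B z" "isl z = isl x" "letter_norm z = letter_dist x y"
      by (rule fp_cons_letter_inv_same_factor[OF x y])
    have "z # h \<in> G" using z h hy 2 by (auto simp: fp_carrier_Cons)
    then have "word_norm (fp_mult A B (fp_inv A B g) (z # h)) = word_norm g + word_norm (z # h)"
      using gx z by (intro word_norm_fp_mult_fp_inv_reduced[OF g]) auto
    then show ?thesis unfolding dist using 2 z by simp
  next
    case 3
    have "letter_inv A B x # y # h \<in> G"
      using 3 h hy x y letter_ok_letter_inv by (auto simp: fp_carrier_Cons)
    then have "word_norm (fp_mult A B (fp_inv A B g) (letter_inv A B x # y # h)) =
        word_norm g + word_norm (letter_inv A B x # y # h)"
      using gx by (intro word_norm_fp_mult_fp_inv_reduced[OF g]) auto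
    moreover have "x \<noteq> y" using 3 by auto
    ultimately show ?thesis unfolding dist
      using 3 x by (simp add: fp_cons_letter_inv_other_factor letter_norm_letter_inv letter_dist_other_factor)
  qed
qed

lemma word_dist_le_word_norm:
  "list_all (letter_ok A B) g \<Longrightarrow> list_all (letter_ok A B) h \<Longrightarrow> word_dist g h \<le> word_norm g + word_norm h"
proof (induction g h rule: word_dist.induct)
  case (3 x g y h)
  then show ?case
    using letter_dist_bounds(3)[of x y] word_norm_nonneg[of g] word_norm_nonneg[of h]
      letter_norm_nonneg[of x] letter_norm_nonneg[of y]
    by auto
qed (auto simp: word_norm_nonneg)

lemma word_dist_sym:
  "list_all (letter_ok A B) g \<Longrightarrow> list_all (letter_ok A B) h \<Longrightarrow> word_dist g h = word_dist h g"
proof (induction g h rule: word_dist.induct)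
  case (1 h)
  then show ?case by (cases h) auto
next
  case (3 x g y h)
  then show ?case using letter_dist_bounds(2)[of x y] by auto
qed auto

lemma abs_word_norm_diff_le_word_dist:
  "list_all (letter_ok A B) g \<Longrightarrow> list_all (letter_ok A B) h \<Longrightarrow>
     \<bar>word_norm g - word_norm h\<bar> \<le> word_dist g h"
proof (induction g h rule: word_dist.induct)
  case (1 h)
  then show ?case using word_norm_nonneg[of h] by simp
next
  case (2 x g)
  then show ?case using word_norm_nonneg[of "x # g"] by simp
next
  case (3 x g y h)
  then show ?case
    using letter_dist_bounds(4)[of x y] word_norm_nonneg[of g] word_norm_nonneg[of h]
    by (auto simp: abs_le_iff)
qed

lemma word_dist_append_same: "word_dist (c @ g) (c @ h) = word_dist g h"
  by (induction c) auto

lemma word_norm_le_word_dist_if_not_prefix: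
  assumes "list_all (letter_ok A B) g" "list_all (letter_ok A B) h" "g = p @ q" "\<nexists>r. h = p @ r"
  shows "word_norm q \<le> word_dist g h"
  using assms
proof (induction g h arbitrary: p rule: word_dist.induct)
  case (1 h)
  then show ?case by auto
next
  case (2 x g)
  then show ?case using word_norm_nonneg[of p] by (cases p) auto
next
  case (3 x g y h)
  show ?case
  proof (cases p)
    case Nil
    with "3.prems" show ?thesis by auto
  next
    case (Cons x' p')
    with "3.prems" have "x = x'" "g = p' @ q" by auto
    with 3 Cons show ?thesis
      using letter_dist_bounds(1)[of x y] word_norm_nonneg[of p'] word_norm_nonneg[of h] by auto
  qed
qed


fun take_norm :: "real \<Rightarrow> ('a + 'b) list \<Rightarrow> ('a + 'b) list" where
  "take_norm t [] = []"
| "take_norm t (x # w) = (if letter_norm x \<le> t then x # take_norm (t - letter_norm x) w else [])"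

lemma take_norm_prefix: "\<exists>q. w = take_norm t w @ q"
  by (induction t w rule: take_norm.induct) auto

lemma word_norm_take_norm_le: "0 \<le> t \<Longrightarrow> word_norm (take_norm t w) \<le> t"
  by (induction t w rule: take_norm.induct) auto

lemma take_norm_next_letter: "w = take_norm t w @ x # u \<Longrightarrow> t < word_norm (take_norm t w) + letter_norm x"
  by (induction t w rule: take_norm.induct) (auto split: if_splits)

lemma take_norm_greatest:
  "list_all (letter_ok A B) p \<Longrightarrow> word_norm p \<le> t \<Longrightarrow> \<exists>s. take_norm t (p @ r) = p @ s"
proof (induction p arbitrary: t)
  case (Cons x p)
  then have "letter_norm x \<le> t" using word_norm_nonneg[of p] by simp
  with Cons show ?case by auto
qed simp

definition level :: "real \<Rightarrow> ('a + 'b) list \<Rightarrow> nat" where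
  "level L g = nat \<lfloor>word_norm g / L\<rfloor>"

definition stem :: "real \<Rightarrow> ('a + 'b) list \<Rightarrow> ('a + 'b) list" where
  "stem L g = take_norm (real (level L g) * L - L / 2) g"

definition pivot :: "real \<Rightarrow> ('a + 'b) list \<Rightarrow> 'a + 'b" where
  "pivot L g = g ! length (stem L g)"

definition tail :: "real \<Rightarrow> ('a + 'b) list \<Rightarrow> ('a + 'b) list" where
  "tail L g = drop (Suc (length (stem L g))) g"

lemma level_bounds:
  assumes "0 < L" "list_all (letter_ok A B) g"
  shows "real (level L g) * L \<le> word_norm g" "word_norm g < real (level L g) * L + L"
proof -
  have "0 \<le> word_norm g / L" using word_norm_nonneg[OF assms(2)] assms(1) by simp
  then have "real (level L g) = of_int \<lfloor>word_norm g / L\<rfloor>" by (simp add: level_def)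
  then show "real (level L g) * L \<le> word_norm g" "word_norm g < real (level L g) * L + L"
    using floor_divide_lower[OF assms(1)] floor_divide_upper[OF assms(1)] by (simp_all add: algebra_simps)
qed

lemma stem_pivot_decomposition:
  assumes "0 < L" "g \<in> G" "level L g \<noteq> 0"
  shows "g = stem L g @ pivot L g # tail L g"
    and "list_all (letter_ok A B) (stem L g)" "letter_ok A B (pivot L g)"
    and "list_all (letter_ok A B) (tail L g)"
    and "word_norm (stem L g) \<le> real (level L g) * L - L / 2"
    and "L / 2 \<le> letter_norm (pivot L g) + word_norm (tail L g)"
    and "word_norm (tail L g) < 3 * L / 2"
proof -
  define t where "t = real (level L g) * L - L / 2"
  define s where "s = stem L g"
  have s_take: "s = take_norm t g" by (simp add: s_def stem_def t_def)
  have g: "list_all (letter_ok A B) g" using assms(2) by (rule fp_carrier_letters)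
  note bounds = level_bounds[OF assms(1) g]
  have "L \<le> real (level L g) * L" using assms(1,3) by simp
  then have s_le: "word_norm s \<le> t"
    using assms(1) unfolding s_take by (intro word_norm_take_norm_le) (simp add: t_def)
  obtain q where q: "g = s @ q"
    using take_norm_prefix unfolding s_take by blast
  with s_le bounds assms(1) have "q \<noteq> []" by (auto simp: t_def)
  then obtain x u where "q = x # u" by (cases q) auto
  with q have gxu: "g = s @ x # u" by simp
  then have "g ! length s = x" "drop (Suc (length s)) g = u" by simp_all
  then have x: "pivot L g = x" and u: "tail L g = u" by (simp_all only: pivot_def tail_def s_def)
  have "t < word_norm s + letter_norm x"
    using take_norm_next_letter[of g t x u] gxu unfolding s_take by blast
  moreover have "word_norm g = word_norm s + letter_norm x + word_norm u"
    using gxu by simp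
  ultimately have "L / 2 \<le> letter_norm x + word_norm u" "word_norm u < 3 * L / 2"
    using s_le bounds unfolding t_def by (simp_all add: algebra_simps)
  moreover have "list_all (letter_ok A B) s" "letter_ok A B x" "list_all (letter_ok A B) u"
    using g gxu by simp_all
  ultimately show "g = stem L g @ pivot L g # tail L g"
    and "list_all (letter_ok A B) (stem L g)" "letter_ok A B (pivot L g)"
    and "list_all (letter_ok A B) (tail L g)"
    and "word_norm (stem L g) \<le> real (level L g) * L - L / 2"
    and "L / 2 \<le> letter_norm (pivot L g) + word_norm (tail L g)"
    and "word_norm (tail L g) < 3 * L / 2"
    using gxu s_le unfolding x u s_def[symmetric] t_def[symmetric] by simp_all
qed

lemma stem_extends:
  assumes "0 < L" "g \<in> G" "level L g \<noteq> 0" "level L h = level L g" "h = stem L g @ r"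
  shows "\<exists>s. stem L h = stem L g @ s"
proof -
  define p where "p = stem L g"
  have "stem L h = take_norm (real (level L g) * L - L / 2) (p @ r)"
    using assms(4,5)[folded p_def] unfolding stem_def[of L h] by simp
  moreover have "\<exists>s. take_norm (real (level L g) * L - L / 2) (p @ r) = p @ s"
    using stem_pivot_decomposition(2,5)[OF assms(1-3)] unfolding p_def by (rule take_norm_greatest)
  ultimately show ?thesis unfolding p_def by simp
qed

lemma word_dist_ge_if_stem_ne:
  assumes "0 < L" "g \<in> G" "h \<in> G" "level L g = level L h" "level L g \<noteq> 0" "stem L g \<noteq> stem L h"
  shows "L / 2 \<le> word_dist g h"
proof -
  have g: "list_all (letter_ok A B) g" and h: "list_all (letter_ok A B) h"
    using assms(2,3) by (simp_all add: fp_carrier_letters)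
  have h0: "level L h \<noteq> 0" using assms(4,5) by simp
  note dg = stem_pivot_decomposition[OF assms(1,2,5)]
  note dh = stem_pivot_decomposition[OF assms(1,3) h0]
  have "(\<nexists>r. h = stem L g @ r) \<or> (\<nexists>r. g = stem L h @ r)"
  proof (rule ccontr)
    assume "\<not> ?thesis"
    then obtain r r' where r: "h = stem L g @ r" and r': "g = stem L h @ r'" by blast
    obtain s where "stem L h = stem L g @ s"
      using stem_extends[OF assms(1,2,5) assms(4)[symmetric] r] by blast
    moreover obtain s' where "stem L g = stem L h @ s'"
      using stem_extends[OF assms(1,3) h0 assms(4) r'] by blast
    ultimately show False using assms(6) by auto
  qed
  then show ?thesis
  proof
    assume "\<nexists>r. h = stem L g @ r"
    then show ?thesis
      using word_norm_le_word_dist_if_not_prefix[OF g h dg(1)] dg(6) by simp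
  next
    assume "\<nexists>r. g = stem L h @ r"
    then show ?thesis
      using word_norm_le_word_dist_if_not_prefix[OF h g dh(1)] dh(6) word_dist_sym[OF g h] by simp
  qed
qed

lemma word_dist_same_stem:
  assumes "0 < L" "g \<in> G" "h \<in> G" "level L g \<noteq> 0" "level L h \<noteq> 0" "stem L g = stem L h"
  shows "word_dist g h =
    (if pivot L g = pivot L h then word_dist (tail L g) (tail L h)
     else letter_dist (pivot L g) (pivot L h) + word_norm (tail L g) + word_norm (tail L h))"
proof -
  have "word_dist g h = word_dist (stem L g @ pivot L g # tail L g) (stem L h @ pivot L h # tail L h)"
    using stem_pivot_decomposition(1)[OF assms(1,2,4)] stem_pivot_decomposition(1)[OF assms(1,3,5)]
    by (rule arg_cong2)
  then show ?thesis using assms(6) by (simp add: word_dist_append_same)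
qed

lemma word_dist_gt_if_level_ne:
  assumes "0 < L" "g \<in> G" "h \<in> G" "level L g \<noteq> level L h" "level L g mod 2 = level L h mod 2"
  shows "L < word_dist g h"
proof -
  have g: "list_all (letter_ok A B) g" and h: "list_all (letter_ok A B) h"
    using assms(2,3) by (simp_all add: fp_carrier_letters)
  have "word_norm h - word_norm g \<le> word_dist g h" "word_norm g - word_norm h \<le> word_dist g h"
    using abs_word_norm_diff_le_word_dist[OF g h] by (simp_all add: abs_le_iff)
  moreover have "real (level L g) * L + 2 * L \<le> real (level L h) * L \<or>
      real (level L h) * L + 2 * L \<le> real (level L g) * L"
  proof -
    have "level L g + 2 \<le> level L h \<or> level L h + 2 \<le> level L g" using assms(4,5) by presburger
    then show ?thesis
      using mult_right_mono[OF _ less_imp_le[OF assms(1)], of "real (level L g) + 2" "real (level L h)"]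
        mult_right_mono[OF _ less_imp_le[OF assms(1)], of "real (level L h) + 2" "real (level L g)"]
      by (auto simp: distrib_right)
  qed
  ultimately show ?thesis
    using level_bounds[OF assms(1) g] level_bounds[OF assms(1) h] assms(1) by linarith
qed

end

locale free_product_colouring = free_product_metric A B dA dB
  for A :: "('a, 'm) monoid_scheme" and B :: "('b, 'n) monoid_scheme"
    and dA :: "'a \<Rightarrow> 'a \<Rightarrow> real" and dB :: "'b \<Rightarrow> 'b \<Rightarrow> real" +
  fixes R :: "nat \<Rightarrow> real" and n :: nat and D :: real
    and letter_colour :: "'a + 'b \<Rightarrow> nat" and letter_key :: "'a + 'b \<Rightarrow> 'k"
  assumes R_pos: "\<forall>i. 0 < R i" and R_mono: "mono R" and D_nonneg: "0 \<le> D" and n_pos: "0 < n"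
    and letter_colour_less: "letter_ok A B x \<Longrightarrow> letter_colour x < n"
    and letter_key_bounded:
      "letter_ok A B x \<Longrightarrow> letter_ok A B y \<Longrightarrow> letter_key x = letter_key y \<Longrightarrow> letter_dist x y \<le> D"
    and letter_key_separated:
      "letter_ok A B x \<Longrightarrow> letter_ok A B y \<Longrightarrow> isl x = isl y \<Longrightarrow> letter_colour x = letter_colour y \<Longrightarrow>
         letter_key x \<noteq> letter_key y \<Longrightarrow> R (2 * letter_colour x + 1) < letter_dist x y"
begin

definition scale :: real where
  "scale = 2 * R (2 * n) + 2"

definition colour :: "('a + 'b) list \<Rightarrow> nat" where
  "colour g =
     (if level scale g = 0 then 0 else 2 * letter_colour (pivot scale g) + level scale g mod 2)"

definition key :: "('a + 'b) list \<Rightarrow> (nat \<times> ('a + 'b) list \<times> 'k) option" where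
  "key g =
     (if level scale g = 0 then None
      else Some (level scale g, stem scale g, letter_key (pivot scale g)))"

lemma scale_pos: "0 < scale"
  using R_pos by (simp add: scale_def add_pos_pos)

lemma colour_mod_2: "colour g mod 2 = level scale g mod 2"
  by (simp add: colour_def)

lemma colour_less:
  assumes "g \<in> G"
  shows "colour g < 2 * n"
proof (cases "level scale g = 0")
  case True
  then show ?thesis using n_pos by (simp add: colour_def)
next
  case False
  then have "letter_colour (pivot scale g) < n"
    using letter_colour_less stem_pivot_decomposition(3)[OF scale_pos assms] by blast
  moreover have "level scale g mod 2 < 2" by simp
  ultimately show ?thesis using False by (simp add: colour_def)
qed

lemma R_colour_less: "g \<in> G \<Longrightarrow> R (colour g) < scale / 2"
  using monoD[OF R_mono, of "colour g" "2 * n"] colour_less[of g] by (simp add: scale_def)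

lemma word_dist_le_if_key_eq:
  assumes g: "g \<in> G" and h: "h \<in> G" and key: "key g = key h"
  shows "word_dist g h \<le> 3 * scale + D"
proof (cases "level scale g = 0")
  case True
  with key have "level scale h = 0" by (auto simp: key_def split: if_splits)
  with True have "word_norm g < scale" "word_norm h < scale"
    using level_bounds(2)[OF scale_pos fp_carrier_letters[OF g]]
      level_bounds(2)[OF scale_pos fp_carrier_letters[OF h]] by simp_all
  then show ?thesis
    using word_dist_le_word_norm[OF fp_carrier_letters[OF g] fp_carrier_letters[OF h]] scale_pos D_nonneg
    by simp
next
  case False
  with key have h0: "level scale h \<noteq> 0" and stem: "stem scale g = stem scale h"
    and pivot: "letter_key (pivot scale g) = letter_key (pivot scale h)"
    by (auto simp: key_def split: if_splits)
  note dg = stem_pivot_decomposition[OF scale_pos g False]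
  note dh = stem_pivot_decomposition[OF scale_pos h h0]
  have "word_dist g h \<le> D + word_norm (tail scale g) + word_norm (tail scale h)"
    using word_dist_same_stem[OF scale_pos g h False h0 stem] word_dist_le_word_norm[OF dg(4) dh(4)]
      letter_key_bounded[OF dg(3) dh(3) pivot] D_nonneg
    by auto
  then show ?thesis using dg(7) dh(7) by linarith
qed

lemma word_dist_gt_if_pivot_key_ne:
  assumes g: "g \<in> G" and h: "h \<in> G" and level: "level scale g = level scale h" "level scale g \<noteq> 0"
    and stem: "stem scale g = stem scale h" and colour: "colour g = colour h"
    and pivot: "letter_key (pivot scale g) \<noteq> letter_key (pivot scale h)"
  shows "R (colour g) < word_dist g h"
proof -
  let ?x = "pivot scale g" and ?y = "pivot scale h"
  have h0: "level scale h \<noteq> 0" using level by simp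
  note dg = stem_pivot_decomposition[OF scale_pos g level(2)]
  note dh = stem_pivot_decomposition[OF scale_pos h h0]
  have dist: "word_dist g h = letter_dist ?x ?y + word_norm (tail scale g) + word_norm (tail scale h)"
    using word_dist_same_stem[OF scale_pos g h level(2) h0 stem] pivot by auto
  have tails: "0 \<le> word_norm (tail scale g)" "0 \<le> word_norm (tail scale h)"
    using word_norm_nonneg dg(4) dh(4) by blast+
  show ?thesis
  proof (cases "isl ?x = isl ?y")
    case False
    then have "letter_dist ?x ?y = letter_norm ?x + letter_norm ?y" by (rule letter_dist_other_factor)
    then show ?thesis
      using dist tails dg(6) letter_norm_nonneg[OF dh(3)] R_colour_less[OF g] by linarith
  next
    case True
    have "letter_colour ?x = letter_colour ?y" using colour level by (simp add: colour_def)
    then have "R (2 * letter_colour ?x + 1) < letter_dist ?x ?y"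
      using letter_key_separated[OF dg(3) dh(3) True] pivot by blast
    moreover have "R (colour g) \<le> R (2 * letter_colour ?x + 1)"
      using R_mono level by (auto simp: colour_def mono_def)
    ultimately show ?thesis using dist tails by linarith
  qed
qed

lemma word_dist_gt_if_key_ne:
  assumes g: "g \<in> G" and h: "h \<in> G" and colour: "colour g = colour h" and key: "key g \<noteq> key h"
  shows "R (colour g) < word_dist g h"
proof -
  have R_less: "R (colour g) < scale / 2" using R_colour_less[OF g] .
  consider "level scale g \<noteq> level scale h"
    | "level scale g = level scale h" "level scale g \<noteq> 0" "stem scale g \<noteq> stem scale h"
    | "level scale g = level scale h" "level scale g \<noteq> 0" "stem scale g = stem scale h"
        "letter_key (pivot scale g) \<noteq> letter_key (pivot scale h)"
    using key by (auto simp: key_def split: if_splits)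
  then show ?thesis
  proof cases
    case 1
    moreover have "level scale g mod 2 = level scale h mod 2" using colour colour_mod_2 by metis
    ultimately show ?thesis
      using word_dist_gt_if_level_ne[OF scale_pos g h] R_less scale_pos by fastforce
  next
    case 2
    then show ?thesis using word_dist_ge_if_stem_ne[OF scale_pos g h] R_less by fastforce
  next
    case 3
    then show ?thesis using word_dist_gt_if_pivot_key_ne[OF g h _ _ _ colour] by blast
  qed
qed

lemma prop_C_colouring_free_product:
  "prop_C_colouring G (fp_dist A B dA dB) R (2 * n) (3 * scale + D) colour key"
  unfolding prop_C_colouring_def
  using colour_less word_dist_le_if_key_eq word_dist_gt_if_key_ne by (simp add: fp_dist_eq_word_dist)

end

context free_product_metric
begin

lemma free_product_colouring_of_factors:
  assumes R: "\<forall>i. 0 < R i" "mono R"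
    and A: "prop_C_colouring (carrier A) dA (\<lambda>i. R (2 * i + 1)) nA DA cA kA" "0 \<le> DA"
    and B: "prop_C_colouring (carrier B) dB (\<lambda>i. R (2 * i + 1)) nB DB cB kB" "0 \<le> DB"
  shows "free_product_colouring A B dA dB R (max nA nB) (max DA DB) (case_sum cA cB) (map_sum kA kB)"
proof (intro free_product_colouring.intro free_product_colouring_axioms.intro)
  show "free_product_metric A B dA dB" by (rule free_product_metric_axioms)
  show "0 < max nA nB"
    using A(1) group.is_monoid[OF group_A] monoid.one_closed unfolding prop_C_colouring_def by fastforce
  fix x y
  assume x: "letter_ok A B x" and y: "letter_ok A B y"
  show "case_sum cA cB x < max nA nB"
    using x A(1) B(1) by (cases x) (auto simp: letter_ok_def prop_C_colouring_def less_max_iff_disj)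
  show "map_sum kA kB x = map_sum kA kB y \<Longrightarrow> letter_dist x y \<le> max DA DB"
    using x y A(1) B(1)
    by (cases x; cases y) (auto simp: letter_ok_def prop_C_colouring_def letter_dist_def le_max_iff_disj)
  show "isl x = isl y \<Longrightarrow> case_sum cA cB x = case_sum cA cB y \<Longrightarrow> map_sum kA kB x \<noteq> map_sum kA kB y \<Longrightarrow>
      R (2 * case_sum cA cB x + 1) < letter_dist x y"
    using x y A(1) B(1)
    by (cases x; cases y) (auto simp: letter_ok_def prop_C_colouring_def letter_dist_def)
qed (use R A B in auto)

lemma asym_property_C_free_product:
  assumes "asym_property_C (carrier A) dA" "asym_property_C (carrier B) dB"
  shows "asym_property_C G (fp_dist A B dA dB)"
proof (rule asym_property_C_if_colourings)
  fix R :: "nat \<Rightarrow> real"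
  assume R: "\<forall>i. 0 < R i" "mono R"
  then have R': "\<forall>i. 0 < R (2 * i + 1)" "mono (\<lambda>i. R (2 * i + 1))"
    by (auto simp: mono_def)
  obtain nA DA cA and kA :: "'a \<Rightarrow> 'a set"
    where A: "prop_C_colouring (carrier A) dA (\<lambda>i. R (2 * i + 1)) nA DA cA kA" "0 \<le> DA"
    by (rule colouring_if_asym_property_C[OF assms(1) R'])
  obtain nB DB cB and kB :: "'b \<Rightarrow> 'b set"
    where B: "prop_C_colouring (carrier B) dB (\<lambda>i. R (2 * i + 1)) nB DB cB kB" "0 \<le> DB"
    by (rule colouring_if_asym_property_C[OF assms(2) R'])
  interpret free_product_colouring A B dA dB R "max nA nB" "max DA DB" "case_sum cA cB" "map_sum kA kB"
    using free_product_colouring_of_factors[OF R A B] .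
  show "\<exists>n D colour (key :: ('a + 'b) list \<Rightarrow> (nat \<times> ('a + 'b) list \<times> ('a set + 'b set)) option).
      prop_C_colouring G (fp_dist A B dA dB) R n D colour key"
    using prop_C_colouring_free_product by blast
qed

end

theorem theorem4p4:
  fixes A :: "('a, 'm) monoid_scheme" and B :: "('b, 'n) monoid_scheme"
    and dA :: "'a \<Rightarrow> 'a \<Rightarrow> real" and dB :: "'b \<Rightarrow> 'b \<Rightarrow> real"
  assumes "group A" and "group B"
    and "countable (carrier A)" and "countable (carrier B)"
    and "metric_on (carrier A) dA" and "metric_on (carrier B) dB"
    and "left_invariant A dA" and "left_invariant B dB"
    and "proper_metric (carrier A) dA" and "proper_metric (carrier B) dB"
    and "asym_property_C (carrier A) dA" and "asym_property_C (carrier B) dB"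
  shows "asym_property_C (fp_carrier A B) (fp_dist A B dA dB)"
proof -
  interpret free_product_metric A B dA dB
    by (rule free_product_metric.intro) (fact assms)+
  show ?thesis using asym_property_C_free_product assms(11,12) .
qed

end
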